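(* For real $p$, the inequalities $$\left( \frac{\sin x}{x}\right) ^{2p}+\left( \frac{\tan x}{x}\right)^{p}>\left( \frac{x}{\sin x}\right) ^{2p}+\left( \frac{x}{\tan x}\right)^{p}>2$$ hold for all $x\in(0,\pi/2)$ if and only if $p\geq \frac{\ln 2}{2(\ln \pi -\ln 2)}$. *)

theory Defs
  imports "HOL-Analysis.Analysis"
begin

end

theory Submission
  imports Defs
begin

text \<open>
  Write \<open>A = (x / sin x) powr (2 * p)\<close> and \<open>B = (x / tan x) powr p\<close>. The first inequality says
  \<open>1/A + 1/B > A + B\<close>, i.e. \<open>A * B < 1\<close>; since \<open>A * B = (x^3 cos x / sin^3 x) powr p\<close> and
  \<open>0 < x^3 cos x < sin^3 x\<close> on \<open>(0, pi/2)\<close>, it holds exactly when \<open>p > 0\<close>.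
  As \<open>x \<rightarrow> pi/2\<close> we have \<open>A + B \<rightarrow> (pi/2) powr (2 * p)\<close>, so \<open>A + B > 2\<close> forces
  \<open>(pi/2) powr (2 * p) \<ge> 2\<close>, i.e. \<open>p \<ge> ln 2 / (2 * (ln pi - ln 2))\<close>.
  Conversely, by concavity of \<open>u \<mapsto> u powr \<lambda>\<close> for \<open>\<lambda> \<le> 1\<close>, \<open>A + B > 2\<close> persists when the exponent
  grows, so it suffices to prove it for \<open>p = 3/4\<close> on \<open>(0, 7/5]\<close> (Pade-type lower bounds for
  \<open>s powr (3/2)\<close> and \<open>t powr (3/4)\<close> plus Taylor polynomials) and for the critical exponent on
  \<open>[7/5, pi/2)\<close> (Bernoulli's inequality plus Taylor expansion at \<open>pi/2\<close>).
\<close>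

definition critical_exponent :: real where
  "critical_exponent = ln 2 / (2 * (ln pi - ln 2))"

subsection \<open>Taylor bounds for sine and cosine\<close>

lemma sin_Maclaurin_remainder_bound:
  "\<bar>sin (x::real) - (\<Sum>m<n. sin_coeff m * x ^ m)\<bar> \<le> \<bar>x\<bar>^n / fact n"
  using Maclaurin_sin_bound[of x n] by (simp add: divide_inverse mult.commute)

lemma cos_Maclaurin_remainder_bound:
  "\<bar>cos (x::real) - (\<Sum>m<n. cos_coeff m * x ^ m)\<bar> \<le> \<bar>x\<bar>^n / fact n"
proof -
  obtain t where t: "cos x = (\<Sum>m<n. cos_coeff m * x ^ m) + (cos (t + 1/2 * real n * pi) / fact n) * x ^ n"
    using Maclaurin_cos_expansion[of x n] by blast
  have "\<bar>cos x - (\<Sum>m<n. cos_coeff m * x ^ m)\<bar> = \<bar>cos (t + 1/2 * real n * pi)\<bar> / fact n * \<bar>x\<bar>^n"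
    using t by (simp add: abs_mult power_abs)
  also have "\<dots> \<le> 1 / fact n * \<bar>x\<bar>^n"
    by (intro mult_right_mono divide_right_mono) auto
  finally show ?thesis by simp
qed

lemma sin_le_Taylor_9: "sin (x::real) \<le> x - x^3/6 + x^5/120 - x^7/5040 + \<bar>x\<bar>^9/362880"
proof -
  have "(\<Sum>m<9. sin_coeff m * x ^ m) = x - x^3/6 + x^5/120 - x^7/5040"
    by (simp add: lessThan_nat_numeral sin_coeff_def fact_numeral)
  then have "\<bar>sin x - (x - x^3/6 + x^5/120 - x^7/5040)\<bar> \<le> \<bar>x\<bar>^9 / 362880"
    using sin_Maclaurin_remainder_bound[of x 9] by (simp add: fact_numeral)
  then show ?thesis
    unfolding abs_le_iff by linarith
qed

lemma sin_ge_Taylor_7: "x - x^3/6 + x^5/120 - \<bar>x\<bar>^7/5040 \<le> sin (x::real)"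
proof -
  have "(\<Sum>m<7. sin_coeff m * x ^ m) = x - x^3/6 + x^5/120"
    by (simp add: lessThan_nat_numeral sin_coeff_def fact_numeral)
  then have "\<bar>sin x - (x - x^3/6 + x^5/120)\<bar> \<le> \<bar>x\<bar>^7 / 5040"
    using sin_Maclaurin_remainder_bound[of x 7] by (simp add: fact_numeral)
  then show ?thesis
    unfolding abs_le_iff by linarith
qed

lemma sin_ge_Taylor_5: "x - x^3/6 - \<bar>x\<bar>^5/120 \<le> sin (x::real)"
proof -
  have "(\<Sum>m<5. sin_coeff m * x ^ m) = x - x^3/6"
    by (simp add: lessThan_nat_numeral sin_coeff_def fact_numeral)
  then have "\<bar>sin x - (x - x^3/6)\<bar> \<le> \<bar>x\<bar>^5 / 120"
    using sin_Maclaurin_remainder_bound[of x 5] by (simp add: fact_numeral)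
  then show ?thesis
    unfolding abs_le_iff by linarith
qed

lemma cos_ge_Taylor_8: "1 - x^2/2 + x^4/24 - x^6/720 - x^8/40320 \<le> cos (x::real)"
proof -
  have "(\<Sum>m<8. cos_coeff m * x ^ m) = 1 - x^2/2 + x^4/24 - x^6/720"
    by (simp add: lessThan_nat_numeral cos_coeff_def fact_numeral)
  then have "\<bar>cos x - (1 - x^2/2 + x^4/24 - x^6/720)\<bar> \<le> x^8 / 40320"
    using cos_Maclaurin_remainder_bound[of x 8] by (simp add: fact_numeral power_even_abs_numeral)
  then show ?thesis
    unfolding abs_le_iff by linarith
qed

lemma cos_le_Taylor_6: "cos (x::real) \<le> 1 - x^2/2 + x^4/24 + x^6/720"
proof -
  have "(\<Sum>m<6. cos_coeff m * x ^ m) = 1 - x^2/2 + x^4/24"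
    by (simp add: lessThan_nat_numeral cos_coeff_def fact_numeral)
  then have "\<bar>cos x - (1 - x^2/2 + x^4/24)\<bar> \<le> x^6 / 720"
    using cos_Maclaurin_remainder_bound[of x 6] by (simp add: fact_numeral power_even_abs_numeral)
  then show ?thesis
    unfolding abs_le_iff by linarith
qed

lemma cos_ge_Taylor_4: "1 - x^2/2 - x^4/24 \<le> cos (x::real)"
proof -
  have "(\<Sum>m<4. cos_coeff m * x ^ m) = 1 - x^2/2"
    by (simp add: lessThan_nat_numeral cos_coeff_def fact_numeral)
  then have "\<bar>cos x - (1 - x^2/2)\<bar> \<le> x^4 / 24"
    using cos_Maclaurin_remainder_bound[of x 4] by (simp add: fact_numeral power_even_abs_numeral)
  then show ?thesis
    unfolding abs_le_iff by linarith
qed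

lemma cos_le_Taylor_4: "cos (x::real) \<le> 1 - x^2/2 + x^4/24"
proof -
  have "(\<Sum>m<4. cos_coeff m * x ^ m) = 1 - x^2/2"
    by (simp add: lessThan_nat_numeral cos_coeff_def fact_numeral)
  then have "\<bar>cos x - (1 - x^2/2)\<bar> \<le> x^4 / 24"
    using cos_Maclaurin_remainder_bound[of x 4] by (simp add: fact_numeral power_even_abs_numeral)
  then show ?thesis
    unfolding abs_le_iff by linarith
qed

lemma Bernoulli_inequality_powr:
  fixes q k :: real
  assumes "0 < q" "1 \<le> k"
  shows "1 + k * (q - 1) \<le> q powr k"
proof -
  have "(q powr k) powr (1/k) * 1 powr (1 - 1/k) \<le> (1/k) * (q powr k) + (1 - 1/k) * 1"
    using assms by (intro Youngs_inequality_0) auto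
  moreover have "(q powr k) powr (1/k) = q"
    using assms by (simp add: powr_powr)
  ultimately have "k * q \<le> k * ((1/k) * (q powr k) + (1 - 1/k))"
    using assms by (intro mult_left_mono) auto
  also have "\<dots> = q powr k + k - 1"
    using assms by (simp add: algebra_simps)
  finally show ?thesis by (simp add: algebra_simps)
qed

lemma sum_gt_two_of_sum_powr_gt_two:
  fixes a b l :: real
  assumes "0 < l" "l \<le> 1" "0 < a" "0 < b" and "2 < a powr l + b powr l"
  shows "2 < a + b"
proof -
  have "a powr l * 1 powr (1 - l) \<le> l * a + (1 - l) * 1"
    and "b powr l * 1 powr (1 - l) \<le> l * b + (1 - l) * 1"
    using assms by (intro Youngs_inequality_0; simp)+
  then have "l * 2 < l * (a + b)"
    using assms(5) by (simp add: algebra_simps)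
  then show ?thesis
    using assms(1) by simp
qed

lemma sum_powr_gt_two_mono:
  fixes s t p' p :: real
  assumes "0 < p'" "p' \<le> p" "0 < s" "0 < t"
    and "2 < s powr (2 * p') + t powr p'"
  shows "2 < s powr (2 * p) + t powr p"
proof (rule sum_gt_two_of_sum_powr_gt_two)
  show "2 < (s powr (2 * p)) powr (p' / p) + (t powr p) powr (p' / p)"
    using assms by (simp add: powr_powr)
qed (use assms in auto)

lemma add_less_inverse_add_iff:
  fixes a b :: real
  assumes "0 < a" "0 < b"
  shows "a + b < inverse a + inverse b \<longleftrightarrow> a * b < 1"
proof -
  have "inverse a + inverse b = (a + b) / (a * b)"
    using assms by (simp add: field_simps)
  moreover have "a + b < (a + b) / (a * b) \<longleftrightarrow> (a + b) * (a * b) < (a + b) * 1"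
    using assms by (simp add: less_divide_eq)
  ultimately show ?thesis
    using assms by (simp only: mult_less_cancel_left_pos add_pos_pos)
qed

lemma powr_less_one_iff:
  fixes b p :: real
  assumes "0 < b" "b < 1"
  shows "b powr p < 1 \<longleftrightarrow> 0 < p"
proof -
  have "ln b < 0"
    using assms by simp
  then show ?thesis
    using assms by (simp add: powr_def mult_less_0_iff)
qed

lemma less_powr_of_power_less:
  fixes a t :: real
  assumes "0 \<le> a" "0 < t" "0 < n" "a ^ n < t ^ m"
  shows "a < t powr (m / n)"
proof -
  have "(a ^ n) powr (1 / n) < (t ^ m) powr (1 / n)"
    using assms by (intro powr_less_mono2) auto
  moreover have "(a ^ n) powr (1 / n) = a"
    using assms by (simp add: root_powr_inverse[symmetric] real_root_power_cancel)
  moreover have "(t ^ m) powr (1 / n) = t powr (m / n)"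
    using assms by (simp add: powr_realpow[symmetric] powr_powr)
  ultimately show ?thesis by simp
qed

text \<open>
  \<open>(3 s + 1) / (s + 3)\<close> and \<open>(3 t + 5) / (5 t + 3)\<close> are the \<open>[1/1]\<close> Pade approximants of
  \<open>sqrt s\<close> and \<open>t powr (-1/4)\<close> at \<open>1\<close>.
\<close>

lemma powr_three_halves_ge_Pade:
  fixes a s :: real
  assumes a: "0 < a" "a \<le> s" and s: "1 \<le> s"
  shows "a * (3 * a + 1) / (a + 3) \<le> s powr (3/2)"
proof -
  have "(s - a) * (3 * a * s + 9 * (a + s) + 3) \<ge> 0"
    using a by (intro mult_nonneg_nonneg) auto
  then have "a * (3 * a + 1) * (s + 3) \<le> s * (3 * s + 1) * (a + 3)"
    by (simp add: algebra_simps)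
  then have "a * (3 * a + 1) / (a + 3) \<le> s * ((3 * s + 1) / (s + 3))"
    using a by (simp add: divide_simps)
  also have "\<dots> \<le> s * sqrt s"
  proof -
    have "s * (s + 3)^2 - (3 * s + 1)^2 = (s - 1)^3"
      by (simp add: algebra_simps power2_eq_square power3_eq_cube)
    moreover have "(s - 1)^3 \<ge> 0"
      using s by simp
    ultimately have "(3 * s + 1)^2 \<le> s * (s + 3)^2"
      by linarith
    then have "((3 * s + 1) / (s + 3))^2 \<le> s"
      using s by (simp add: power_divide pos_divide_le_eq)
    then show ?thesis
      using s by (intro mult_left_mono real_le_rsqrt) auto
  qed
  also have "\<dots> = s powr (3/2)"
  proof -
    have "s powr (3/2) = s powr 1 * s powr (1/2)"
      unfolding powr_add[symmetric] by simp
    then show ?thesis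
      using s by (simp add: powr_half_sqrt)
  qed
  finally show ?thesis .
qed

lemma powr_three_quarters_ge_Pade:
  fixes a t :: real
  assumes a: "0 < a" "a \<le> t" and t: "t \<le> 1"
  shows "a * (3 * a + 5) / (5 * a + 3) \<le> t powr (3/4)"
proof -
  define v where "v = (5 * t + 3) / (3 * t + 5)"
  have "0 < v"
    using a by (simp add: v_def)
  have "(t - a) * (15 * a * t + 9 * (a + t) + 15) \<ge> 0"
    using a by (intro mult_nonneg_nonneg) auto
  then have "a * (3 * a + 5) * (5 * t + 3) \<le> t * (3 * t + 5) * (5 * a + 3)"
    by (simp add: algebra_simps)
  then have "a * (3 * a + 5) / (5 * a + 3) \<le> t / v"
    using a by (simp add: divide_simps v_def)
  also have "\<dots> \<le> t / t powr (1/4)"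
  proof -
    have "(5 * t + 3)^4 - t * (3 * t + 5)^4 = (1 - t)^3 * (81 + 158 * t + 81 * t^2)"
      by (simp add: algebra_simps eval_nat_numeral)
    moreover have "(1 - t)^3 * (81 + 158 * t + 81 * t^2) \<ge> 0"
      using a t by simp
    ultimately have "t \<le> v ^ 4"
      using a by (simp add: v_def power_divide pos_le_divide_eq)
    then have "t powr (1/4) \<le> (v ^ 4) powr (1/4)"
      using a by (intro powr_mono2) auto
    also have "\<dots> = v"
    proof -
      have "(v powr 4) powr (1/4) = v"
        using \<open>0 < v\<close> by (simp only: powr_powr) simp
      then show ?thesis
        using \<open>0 < v\<close> by simp
    qed
    finally have "t powr (1/4) \<le> v" .
    then show ?thesis
      using a \<open>0 < v\<close> by (intro divide_left_mono) auto
  qed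
  also have "\<dots> = t powr (3/4)"
    using a by (simp add: divide_simps powr_add[symmetric])
  finally show ?thesis .
qed

subsection \<open>The product of the two terms\<close>

lemma cos_Taylor_less_sinc_Taylor_cube:
  fixes z :: real
  assumes z: "0 < z" "z \<le> 49/25"
  shows "1 - z/2 + z^2/24 + z^3/720 < (1 - z/6 + z^2/120 - z^3/5040)^3"
proof -
  define r where "r = 1/15 - 113/7560 * z + 37/33600 * z^2 - 37/604800 * z^3 + 199/84672000 * z^4
    - 31/508032000 * z^5 + 1/1016064000 * z^6 - 1/128024064000 * z^7"
  have "(1 - z/6 + z^2/120 - z^3/5040)^3 - (1 - z/2 + z^2/24 + z^3/720) = z^2 * r"
    unfolding r_def by (simp add: divide_simps) algebra
  moreover have "0 < r"
  proof -
    have "z^3 \<le> (49/25)^3" "z^5 \<le> (49/25)^5" "z^7 \<le> (49/25)^7"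
      using z by (intro power_mono; simp)+
    then have "z^3 \<le> 117649/15625" "z^5 \<le> 282475249/9765625" "z^7 \<le> 678223072849/6103515625"
      by (simp_all add: power_divide)
    moreover have "0 \<le> z^2" "0 \<le> z^4" "0 \<le> z^6"
      using z by simp_all
    ultimately show ?thesis
      using z unfolding r_def by linarith
  qed
  ultimately show ?thesis
    using z by (smt (verit) zero_less_power mult_pos_pos)
qed

lemma cube_mult_cos_less_sin_cube:
  fixes x :: real
  assumes x: "0 < x" "x < pi/2"
  shows "x^3 * cos x < (sin x)^3"
proof (cases "x \<le> 7/5")
  case True
  define z where "z = x^2"
  define v where "v = 1 - z/6 + z^2/120 - z^3/5040"
  define w where "w = 1 - z/2 + z^2/24 + z^3/720"
  have z: "0 < z" "z \<le> 49/25"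
    using x True power_mono[OF True, of 2] by (simp_all add: z_def power_divide)
  have "x * v = x - x^3/6 + x^5/120 - \<bar>x\<bar>^7/5040"
    using x unfolding v_def z_def by (simp add: divide_simps) algebra
  then have sin_ge: "x * v \<le> sin x"
    using sin_ge_Taylor_7[of x] by simp
  have "w = 1 - x^2/2 + x^4/24 + x^6/720"
    unfolding w_def z_def by (simp add: divide_simps)
  then have cos_le: "cos x \<le> w"
    using cos_le_Taylor_6[of x] by simp
  have "0 < v"
  proof -
    have "z^3 \<le> (49/25)^3"
      using z by (intro power_mono) auto
    then have "z^3 \<le> 117649/15625"
      by (simp add: power_divide)
    then show ?thesis
      using z zero_le_power2[of z] unfolding v_def by linarith
  qed
  have "x^3 * cos x \<le> x^3 * w"
    using cos_le x by (intro mult_left_mono) auto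
  also have "\<dots> < x^3 * v^3"
    using cos_Taylor_less_sinc_Taylor_cube[OF z] x unfolding v_def w_def
    by (intro mult_strict_left_mono) auto
  also have "\<dots> = (x * v)^3"
    by (simp add: power_mult_distrib)
  also have "\<dots> \<le> (sin x)^3"
    using sin_ge x \<open>0 < v\<close> by (intro power_mono) auto
  finally show ?thesis .
next
  case False
  have pi2: "pi/2 \<le> 15708/10000"
    using pi_approx by simp
  have "cos x \<le> cos (7/5)"
    using False x pi2 by (intro cos_monotone_0_pi_le) auto
  also have "cos (7/5::real) \<le> 1/5"
    using cos_le_Taylor_6[of "7/5"] by (simp add: power_divide)
  finally have cos_le: "cos x \<le> 1/5" .
  have "(49/50::real) \<le> sin (7/5)"
    using sin_ge_Taylor_7[of "7/5"] by (simp add: power_divide)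
  also have "sin (7/5) \<le> sin x"
    using False x by (intro sin_monotone_2pi_le) auto
  finally have sin_ge: "49/50 \<le> sin x" .
  have "x^3 \<le> (15708/10000)^3"
    using x pi2 by (intro power_mono) auto
  then have "x^3 \<le> 4"
    by (simp add: power_divide)
  moreover have "0 < cos x"
    using x by (intro cos_gt_zero_pi) auto
  ultimately have "x^3 * cos x \<le> 4 * (1/5)"
    using cos_le by (intro mult_mono) auto
  also have "\<dots> < (49/50)^3"
    by (simp add: power_divide)
  also have "\<dots> \<le> (sin x)^3"
    using sin_ge by (intro power_mono) auto
  finally show ?thesis .
qed

lemma powr_mult_x_cot_eq:
  fixes x p :: real
  assumes x: "0 < x" "x < pi/2"
  shows "(x / sin x) powr (2 * p) * (x * cos x / sin x) powr p = (x^3 * cos x / (sin x)^3) powr p"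
proof -
  have "0 < sin x" "0 < cos x"
    using x by (auto intro: sin_gt_zero cos_gt_zero_pi)
  then have "(x / sin x) powr (2 * p) = ((x / sin x)^2) powr p"
    using x by (simp add: powr_powr[symmetric] powr_numeral)
  moreover have "(x / sin x)^2 * (x * cos x / sin x) = x^3 * cos x / (sin x)^3"
    by (simp add: power2_eq_square power3_eq_cube)
  ultimately show ?thesis
    by (metis powr_mult[symmetric] zero_le_power2 \<open>0 < sin x\<close> \<open>0 < cos x\<close> x(1)
        divide_nonneg_pos mult_nonneg_nonneg less_imp_le)
qed

lemma reciprocal_sum_gt_iff_pos:
  fixes x p :: real
  assumes x: "0 < x" "x < pi/2"
  shows "(sin x / x) powr (2 * p) + (tan x / x) powr p > (x / sin x) powr (2 * p) + (x / tan x) powr p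
    \<longleftrightarrow> 0 < p" (is "?ineq \<longleftrightarrow> _")
proof -
  have "0 < sin x" "0 < cos x"
    using x by (auto intro: sin_gt_zero cos_gt_zero_pi)
  have cot: "x / tan x = x * cos x / sin x"
    by (simp add: tan_def)
  have "0 < (x / sin x) powr (2 * p)" "0 < (x * cos x / sin x) powr p"
    using x \<open>0 < sin x\<close> \<open>0 < cos x\<close> by simp_all
  moreover have "sin x / x = inverse (x / sin x)" "tan x / x = inverse (x / tan x)"
    by simp_all
  ultimately have "?ineq \<longleftrightarrow> (x / sin x) powr (2 * p) * (x * cos x / sin x) powr p < 1"
    unfolding cot by (simp only: inverse_powr add_less_inverse_add_iff)
  also have "\<dots> \<longleftrightarrow> 0 < p"
    unfolding powr_mult_x_cot_eq[OF x]
    using cube_mult_cos_less_sin_cube[OF x] x \<open>0 < sin x\<close> \<open>0 < cos x\<close>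
    by (intro powr_less_one_iff) auto
  finally show ?thesis .
qed

subsection \<open>The exponent \<open>3/4\<close> away from \<open>pi/2\<close>\<close>

definition sinc_upper_poly :: "real \<Rightarrow> real" where
  "sinc_upper_poly z = 1 - z/6 + z^2/120 - z^3/5040 + z^4/362880"

definition cos_lower_poly :: "real \<Rightarrow> real" where
  "cos_lower_poly z = 1 - z/2 + z^2/24 - z^3/720 - z^4/40320"

lemma sin_le_sinc_upper_poly:
  fixes x :: real
  assumes "0 \<le> x"
  shows "sin x \<le> x * sinc_upper_poly (x^2)"
proof -
  have "x - x^3/6 + x^5/120 - x^7/5040 + \<bar>x\<bar>^9/362880 = x * sinc_upper_poly (x^2)"
    using assms unfolding sinc_upper_poly_def by (simp add: divide_simps) algebra
  then show ?thesis
    using sin_le_Taylor_9[of x] by simp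
qed

lemma cos_lower_poly_le_cos: "cos_lower_poly (x^2) \<le> cos (x::real)"
proof -
  have "cos_lower_poly (x^2) = 1 - x^2/2 + x^4/24 - x^6/720 - x^8/40320"
    unfolding cos_lower_poly_def by (simp add: divide_simps)
  then show ?thesis
    using cos_ge_Taylor_8[of x] by simp
qed

lemma sinc_upper_poly_cos_lower_poly_bounds:
  fixes z :: real
  assumes z: "0 < z" "z \<le> 49/25"
  shows "0 < sinc_upper_poly z" "sinc_upper_poly z < 1" "0 < cos_lower_poly z"
proof -
  have "z^2 \<le> 49/25 * z"
    using z by (simp add: power2_eq_square mult_right_mono)
  moreover have "z^3 \<le> 117649/15625" "z^4 \<le> 5764801/390625"
    using power_mono[OF z(2), of 3] power_mono[OF z(2), of 4] z by (simp_all add: power_divide)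
  moreover have "z^4 \<le> 117649/15625 * z"
    using mult_right_mono[OF \<open>z^3 \<le> 117649/15625\<close>, of z] z by (simp add: eval_nat_numeral)
  moreover have "0 \<le> z^2" "0 \<le> z^3" "0 \<le> z^4"
    using z by simp_all
  ultimately show "0 < sinc_upper_poly z" "sinc_upper_poly z < 1" "0 < cos_lower_poly z"
    using z unfolding sinc_upper_poly_def cos_lower_poly_def by linarith+
qed

lemma Pade_numerator_pos:
  fixes z :: real
  assumes z: "0 < z" "z \<le> 49/25"
  defines "u \<equiv> sinc_upper_poly z" and "c \<equiv> cos_lower_poly z"
  shows "0 < (3 + u) * (5 * c + 3 * u) + c * (3 * c + 5 * u) * (1 + 3 * u)
    - 2 * u * (1 + 3 * u) * (5 * c + 3 * u)"
proof -
  define q where "q = 2/5 - 113/420 * z + 311/6300 * z^2 - 1387/302400 * z^3 + 9869/42336000 * z^4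
    - 487/84672000 * z^5 - 19/6096384000 * z^6 + 5963/1536288768000 * z^7
    - 787/9217732608000 * z^8 + 1/2257403904000 * z^9 + 47/2654706991104000 * z^10"
  have "(3 + u) * (5 * c + 3 * u) + c * (3 * c + 5 * u) * (1 + 3 * u)
    - 2 * u * (1 + 3 * u) * (5 * c + 3 * u) = z^2 * q"
    unfolding u_def c_def q_def sinc_upper_poly_def cos_lower_poly_def
    by (simp add: divide_simps) algebra
  moreover have "0 < q"
  proof -
    have "(2/5) - (113/420) * z + (311/6300) * z^2 - (8762/140625)
      = (49/25 - z) * (113/420 - 311/6300 * (z + 49/25))"
      by (simp add: divide_simps) algebra
    moreover have "(49/25 - z) * (113/420 - 311/6300 * (z + 49/25)) \<ge> 0"
      using z by (intro mult_nonneg_nonneg) auto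
    moreover have "z^3 \<le> 117649/15625" "z^5 \<le> 282475249/9765625" "z^6 \<le> 13841287201/244140625"
      "z^8 \<le> 33232930569601/152587890625"
      using power_mono[OF z(2), of 3] power_mono[OF z(2), of 5] power_mono[OF z(2), of 6]
        power_mono[OF z(2), of 8] z by (simp_all add: power_divide)
    moreover have "0 \<le> z^4" "0 \<le> z^7" "0 \<le> z^9" "0 \<le> z^10"
      using z by simp_all
    ultimately show ?thesis
      unfolding q_def by linarith
  qed
  ultimately show ?thesis
    using z by simp
qed

lemma Pade_sum_gt_two:
  fixes u c :: real
  assumes u: "0 < u" and c: "0 < c"
    and num: "0 < (3 + u) * (5 * c + 3 * u) + c * (3 * c + 5 * u) * (1 + 3 * u)
      - 2 * u * (1 + 3 * u) * (5 * c + 3 * u)"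
  shows "2 < (1/u) * (3 * (1/u) + 1) / ((1/u) + 3) + (c/u) * (3 * (c/u) + 5) / (5 * (c/u) + 3)"
proof -
  define d where "d = u * (1 + 3 * u) * (5 * c + 3 * u)"
  have "0 < d"
    using u c by (simp add: d_def)
  have "(1/u) * (3 * (1/u) + 1) / ((1/u) + 3) + (c/u) * (3 * (c/u) + 5) / (5 * (c/u) + 3)
    = ((3 + u) * (5 * c + 3 * u) + c * (3 * c + 5 * u) * (1 + 3 * u)) / d"
    using u c unfolding d_def by (simp add: divide_simps)
  moreover have "2 < ((3 + u) * (5 * c + 3 * u) + c * (3 * c + 5 * u) * (1 + 3 * u)) / d"
    using num \<open>0 < d\<close> by (simp add: less_divide_eq d_def algebra_simps)
  ultimately show ?thesis
    by simp
qed

lemma sum_gt_two_three_quarters: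
  fixes x :: real
  assumes x: "0 < x" "x \<le> 7/5"
  shows "2 < (x / sin x) powr (3/2) + (x * cos x / sin x) powr (3/4)"
proof -
  have "7/5 < pi/2"
    using pi_approx by simp
  then have "0 < sin x" "0 < cos x"
    using x by (auto intro: sin_gt_zero cos_gt_zero_pi)
  define z where "z = x^2"
  define u where "u = sinc_upper_poly z"
  define c where "c = cos_lower_poly z"
  have z: "0 < z" "z \<le> 49/25"
    using x power_mono[OF x(2), of 2] by (simp_all add: z_def power_divide)
  have u: "0 < u" "u < 1" and c: "0 < c"
    using sinc_upper_poly_cos_lower_poly_bounds[OF z] by (simp_all add: u_def c_def)
  define s where "s = x / sin x"
  define t where "t = x * cos x / sin x"
  have "x / (x * u) \<le> x / sin x"
    using sin_le_sinc_upper_poly[of x] x u \<open>0 < sin x\<close>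
    by (intro divide_left_mono) (auto simp: u_def z_def)
  then have s_ge: "1/u \<le> s"
    using x by (simp add: s_def)
  then have "1 < s"
    using u by (smt (verit) less_divide_eq_1_pos)
  have "x * c / (x * u) \<le> x * cos x / sin x"
    using sin_le_sinc_upper_poly[of x] cos_lower_poly_le_cos[of x] x u c \<open>0 < sin x\<close>
    by (intro frac_le) (auto simp: u_def c_def z_def intro: mult_left_mono)
  then have t_ge: "c/u \<le> t"
    using x by (simp add: t_def)
  have "0 < t"
    using x \<open>0 < sin x\<close> \<open>0 < cos x\<close> by (simp add: t_def)
  show ?thesis
  proof (cases "1 \<le> t")
    case True
    have "1 < s powr (3/2)"
      using powr_less_mono2[of "3/2" 1 s] \<open>1 < s\<close> by simp
    moreover have "1 \<le> t powr (3/4)"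
      using True by (intro ge_one_powr_ge_zero) auto
    ultimately show ?thesis
      unfolding s_def t_def by linarith
  next
    case False
    have "(1/u) * (3 * (1/u) + 1) / ((1/u) + 3) \<le> s powr (3/2)"
      using powr_three_halves_ge_Pade[of "1/u" s] s_ge \<open>1 < s\<close> u by simp
    moreover have "(c/u) * (3 * (c/u) + 5) / (5 * (c/u) + 3) \<le> t powr (3/4)"
      using powr_three_quarters_ge_Pade[of "c/u" t] t_ge False u c by simp
    moreover have "2 < (1/u) * (3 * (1/u) + 1) / ((1/u) + 3) + (c/u) * (3 * (c/u) + 5) / (5 * (c/u) + 3)"
      using Pade_sum_gt_two[OF u(1) c] Pade_numerator_pos[OF z] by (simp add: u_def c_def)
    ultimately show ?thesis
      unfolding s_def t_def by linarith
  qed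
qed

subsection \<open>The critical exponent near \<open>pi/2\<close>\<close>

lemma half_pi_powr_two_critical_exponent: "(pi/2) powr (2 * critical_exponent) = 2"
proof -
  have "0 < ln (pi/2)"
    using pi_approx by (intro ln_gt_zero) simp
  moreover have "ln pi - ln 2 = ln (pi/2)"
    by (simp add: ln_div)
  ultimately show ?thesis
    unfolding critical_exponent_def powr_def using pi_gt3 by simp
qed

lemma critical_exponent_bounds: "3/4 \<le> critical_exponent" "critical_exponent \<le> 4/5"
proof -
  define L where "L = ln (pi/2)"
  have pi2: "15707/10000 \<le> pi/2" "pi/2 \<le> 15708/10000"
    using pi_approx by simp_all
  have "0 < L"
    unfolding L_def using pi2 by (intro ln_gt_zero) simp
  have "(pi/2)^3 \<le> (15708/10000)^3"
    using pi2 by (intro power_mono) auto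
  then have "ln ((pi/2)^3) \<le> ln 4"
    by (subst ln_le_cancel_iff) (auto simp: power_divide)
  moreover have "ln (4::real) = 2 * ln 2"
    using ln_mult[of 2 2] by simp
  ultimately have "3 * L \<le> 2 * ln 2"
    unfolding L_def by (simp add: ln_realpow)
  moreover have "(15707/10000::real)^8 \<le> (pi/2)^8"
    using pi2 by (intro power_mono) auto
  then have "ln (2^5) \<le> ln ((pi/2)^8)"
    by (subst ln_le_cancel_iff) (auto simp: power_divide)
  then have "5 * ln 2 \<le> 8 * L"
    unfolding L_def by (simp only: ln_realpow zero_less_numeral pi_half_gt_zero)
  moreover have "ln pi - ln 2 = L"
    unfolding L_def by (simp add: ln_div)
  ultimately show "3/4 \<le> critical_exponent" "critical_exponent \<le> 4/5"
    unfolding critical_exponent_def using \<open>0 < L\<close> by (simp_all add: le_divide_eq divide_le_eq)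
qed

text \<open>
  Interval arithmetic: on \<open>[a, b]\<close> each factor is bounded by its value at an endpoint.
  The constant \<open>6367/10000\<close> is an upper bound for \<open>2/pi\<close>.
\<close>

lemma endpoint_estimate_on_interval:
  fixes x y e S C a b :: real
  assumes y: "0 < y" "a \<le> y" "y \<le> b" and x: "7/5 \<le> x"
    and e: "0 \<le> e" "e \<le> y * (6367/10000 - y/2 + y^3/24)"
    and S: "y * (1 - y^2/6 - y^4/120) \<le> S" and C: "1 - y^2/2 - y^4/24 \<le> C"
    and b: "0 \<le> 1 - b^2/6 - b^4/120" "0 \<le> 1 - b^2/2 - b^4/24" "0 \<le> 6367/10000 - b/2"
    and num: "(16/5)^5 * b * (6367/10000 - a/2 + b^3/24)^5
      < (7/5)^4 * (1 - b^2/6 - b^4/120)^4 * (1 - b^2/2 - b^4/24)"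
  shows "(16/5)^5 * e^5 < x^4 * S^4 * C"
proof -
  define r where "r = 6367/10000 - a/2 + b^3/24"
  define s where "s = 1 - b^2/6 - b^4/120"
  define c where "c = 1 - b^2/2 - b^4/24"
  have "y^2 \<le> b^2" "y^3 \<le> b^3" "y^4 \<le> b^4"
    using y by (intro power_mono; simp)+
  then have r: "0 \<le> 6367/10000 - y/2 + y^3/24" "6367/10000 - y/2 + y^3/24 \<le> r"
    and s: "0 \<le> s" "s \<le> 1 - y^2/6 - y^4/120"
    and c: "0 \<le> c" "c \<le> C"
    using y b C zero_le_power[of y 3] unfolding r_def s_def c_def by linarith+
  have "e \<le> y * r"
    using e(2) mult_left_mono[OF r(2), of y] y by linarith
  then have "(16/5)^5 * e^5 \<le> (16/5)^5 * (y * r)^5"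
    using e(1) by (simp add: power_mono)
  also have "\<dots> = y^4 * ((16/5)^5 * y * r^5)"
    by (simp add: power_mult_distrib eval_nat_numeral)
  also have "\<dots> \<le> y^4 * ((16/5)^5 * b * r^5)"
    using y r by (intro mult_left_mono) (auto intro: mult_right_mono)
  also have "\<dots> < y^4 * ((7/5)^4 * s^4 * c)"
    using num y unfolding r_def s_def c_def by (intro mult_strict_left_mono) auto
  also have "\<dots> = (7/5)^4 * (y * s)^4 * c"
    by (simp add: power_mult_distrib)
  also have "\<dots> \<le> x^4 * S^4 * C"
  proof -
    have "y * s \<le> S"
      using S mult_left_mono[OF s(2), of y] y by linarith
    then have "(y * s)^4 \<le> S^4"
      using s y by (intro power_mono) auto
    moreover have "(7/5)^4 \<le> x^4"
      using x by (intro power_mono) auto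
    ultimately show ?thesis
      using c s y by (intro mult_mono) auto
  qed
  finally show ?thesis .
qed

lemma endpoint_estimate:
  fixes x y e S C :: real
  assumes y: "0 < y" "y \<le> 171/1000" and x: "7/5 \<le> x"
    and e: "0 \<le> e" "e \<le> y * (6367/10000 - y/2 + y^3/24)"
    and S: "y * (1 - y^2/6 - y^4/120) \<le> S" and C: "1 - y^2/2 - y^4/24 \<le> C"
  shows "(16/5)^5 * e^5 < x^4 * S^4 * C"
proof -
  consider "y \<le> 21/200" | "21/200 \<le> y" "y \<le> 79/500" | "79/500 \<le> y"
    by linarith
  then show ?thesis
  proof cases
    case 1
    show ?thesis
      by (rule endpoint_estimate_on_interval[of y 0 "21/200"])
        (use assms 1 in \<open>simp_all add: power_divide\<close>)
  next
    case 2
    show ?thesis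
      by (rule endpoint_estimate_on_interval[of y "21/200" "79/500"])
        (use assms 2 in \<open>simp_all add: power_divide\<close>)
  next
    case 3
    show ?thesis
      by (rule endpoint_estimate_on_interval[of y "79/500" "171/1000"])
        (use assms 3 in \<open>simp_all add: power_divide\<close>)
  qed
qed

lemma x_cot_le_one:
  fixes x :: real
  assumes x: "7/5 \<le> x" "x < pi/2"
  shows "x * cos x / sin x \<le> 1"
proof -
  define y where "y = pi/2 - x"
  have pi2: "pi/2 \<le> 15708/10000"
    using pi_approx by simp
  have y: "0 < y" "y \<le> 171/1000"
    using x pi2 by (simp_all add: y_def)
  have "x * sin y \<le> (15708/10000) * (171/1000)"
    using x pi2 sin_x_le_x[of y] y sin_ge_zero[of y] by (intro mult_mono) auto
  moreover have "y^2 \<le> (171/1000)^2" "y^4 \<le> (171/1000)^4"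
    using y by (intro power_mono; simp)+
  ultimately have "x * sin y \<le> cos y"
    using cos_ge_Taylor_4[of y] by (simp add: power_divide)
  moreover have "sin x = cos y"
    unfolding y_def by (simp add: sin_cos_eq)
  moreover have "cos x = sin y"
    unfolding y_def by (simp add: cos_sin_eq)
  moreover have "0 < sin x"
    using x by (intro sin_gt_zero) auto
  ultimately show ?thesis
    by (simp add: divide_le_eq)
qed

lemma x_cot_powr_gt_near_half_pi:
  fixes x :: real
  assumes x: "7/5 \<le> x" "x < pi/2"
  shows "16/5 * (1 - x / (pi/2 * sin x)) < (x * cos x / sin x) powr (4/5)"
proof -
  define y where "y = pi/2 - x"
  have pi2: "15707/10000 \<le> pi/2" "pi/2 \<le> 15708/10000"
    using pi_approx by simp_all
  have y: "0 < y" "y \<le> 171/1000"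
    using x pi2 by (simp_all add: y_def)
  have sin_x: "sin x = cos y"
    unfolding y_def by (simp add: sin_cos_eq)
  have cos_x: "cos x = sin y"
    unfolding y_def by (simp add: cos_sin_eq)
  have "0 < cos y" "0 < sin y"
    using y pi2 by (auto intro: cos_gt_zero_pi sin_gt_zero)
  have "0 < (x * cos x / sin x) powr (4/5)"
    using x \<open>0 < cos y\<close> \<open>0 < sin y\<close> unfolding sin_x cos_x by simp
  define e where "e = cos y - 1 + 2 * y / pi"
  have "x = pi/2 - y"
    by (simp add: y_def)
  then have qe: "1 - x / (pi/2 * sin x) = e / cos y"
    unfolding sin_x e_def using \<open>0 < cos y\<close> by (simp add: field_simps)
  show ?thesis
  proof (cases "e \<le> 0")
    case True
    then have "e / cos y \<le> 0"
      using \<open>0 < cos y\<close> by (rule divide_nonpos_pos)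
    then show ?thesis
      unfolding qe using \<open>0 < (x * cos x / sin x) powr (4/5)\<close> by linarith
  next
    case False
    have "e \<le> y * (6367/10000 - y/2 + y^3/24)"
    proof -
      have "2 * y / pi \<le> 6367/10000 * y"
        using pi_approx y by (simp add: divide_le_eq mult.commute mult.left_commute)
      moreover have "y * (6367/10000 - y/2 + y^3/24) = 6367/10000 * y - y^2/2 + y^4/24"
        by (simp add: algebra_simps power2_eq_square eval_nat_numeral)
      ultimately show ?thesis
        using cos_le_Taylor_4[of y] unfolding e_def by linarith
    qed
    moreover have "y * (1 - y^2/6 - y^4/120) \<le> sin y"
      using sin_ge_Taylor_5[of y] y by (simp add: algebra_simps eval_nat_numeral)
    ultimately have "(16/5)^5 * e^5 < x^4 * (sin y)^4 * cos y"
      using False by (intro endpoint_estimate[OF y(1) y(2) x(1) _ _ _ cos_ge_Taylor_4]) auto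
    then have "(16/5)^5 * e^5 / (cos y)^5 < x^4 * (sin y)^4 * cos y / (cos y)^5"
      using \<open>0 < cos y\<close> by (intro divide_strict_right_mono) auto
    moreover have "(16/5)^5 * e^5 / (cos y)^5 = (16/5 * (e / cos y))^5"
      by (simp add: power_divide power_mult_distrib)
    moreover have "x^4 * (sin y)^4 * cos y / (cos y)^5 = (x * sin y / cos y)^4"
      using \<open>0 < cos y\<close> by (simp add: power_divide power_mult_distrib eval_nat_numeral)
    ultimately have "(16/5 * (e / cos y))^5 < (x * sin y / cos y)^4"
      by simp
    moreover have "0 \<le> 16/5 * (e / cos y)" "0 < x * sin y / cos y"
      using False x \<open>0 < cos y\<close> \<open>0 < sin y\<close> by auto
    ultimately have "16/5 * (e / cos y) < (x * sin y / cos y) powr (real 4 / real 5)"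
      by (intro less_powr_of_power_less) auto
    then show ?thesis
      unfolding qe unfolding sin_x cos_x by simp
  qed
qed

lemma sum_gt_two_critical_exponent:
  fixes x :: real
  assumes x: "7/5 \<le> x" "x < pi/2"
  shows "2 < (x / sin x) powr (2 * critical_exponent) + (x * cos x / sin x) powr critical_exponent"
proof -
  define k where "k = 2 * critical_exponent"
  define q where "q = x / (pi/2 * sin x)"
  define t where "t = x * cos x / sin x"
  have "0 < sin x" "0 < cos x"
    using x by (auto intro: sin_gt_zero cos_gt_zero_pi)
  then have "0 < q" "0 < t"
    using x by (simp_all add: q_def t_def)
  have "x / sin x = pi/2 * q"
    using \<open>0 < sin x\<close> by (simp add: q_def)
  then have "(x / sin x) powr k = (pi/2) powr k * q powr k"
    using \<open>0 < q\<close> by (simp only: powr_mult pi_ge_zero divide_nonneg_pos zero_less_numeral less_imp_le)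
  then have s_eq: "(x / sin x) powr k = 2 * q powr k"
    by (simp add: k_def half_pi_powr_two_critical_exponent)
  show ?thesis
  proof (cases "1 \<le> q")
    case True
    have "1 \<le> q powr k"
      using True critical_exponent_bounds by (intro ge_one_powr_ge_zero) (auto simp: k_def)
    moreover have "0 < t powr critical_exponent"
      using \<open>0 < t\<close> by simp
    ultimately show ?thesis
      using s_eq unfolding k_def t_def by linarith
  next
    case False
    have "1 + k * (q - 1) \<le> q powr k"
      using critical_exponent_bounds \<open>0 < q\<close> by (intro Bernoulli_inequality_powr) (auto simp: k_def)
    moreover have "8/5 * (q - 1) \<le> k * (q - 1)"
      using False critical_exponent_bounds by (intro mult_right_mono_neg) (auto simp: k_def)
    moreover have "t powr (4/5) \<le> t powr critical_exponent"
      using critical_exponent_bounds x_cot_le_one[OF x] \<open>0 < t\<close>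
      by (intro powr_mono') (auto simp: t_def)
    moreover have "16/5 * (1 - q) < t powr (4/5)"
      using x_cot_powr_gt_near_half_pi[OF x] by (simp add: q_def t_def)
    ultimately have "2 < (x / sin x) powr k + t powr critical_exponent"
      using s_eq by argo
    then show ?thesis
      unfolding k_def t_def .
  qed
qed

lemma sum_gt_two_of_critical_exponent_le:
  fixes x p :: real
  assumes p: "critical_exponent \<le> p" and x: "0 < x" "x < pi/2"
  shows "2 < (x / sin x) powr (2 * p) + (x * cos x / sin x) powr p"
proof -
  have "0 < sin x" "0 < cos x"
    using x by (auto intro: sin_gt_zero cos_gt_zero_pi)
  then have pos: "0 < x / sin x" "0 < x * cos x / sin x"
    using x by simp_all
  show ?thesis
  proof (cases "x \<le> 7/5")
    case True
    show ?thesis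
      using sum_powr_gt_two_mono[of "3/4" p] sum_gt_two_three_quarters[OF x(1) True]
        critical_exponent_bounds p pos by simp
  next
    case False
    show ?thesis
      using sum_powr_gt_two_mono[of critical_exponent p] sum_gt_two_critical_exponent[of x]
        critical_exponent_bounds p pos False x by simp
  qed
qed

lemma critical_exponent_le_of_sum_gt_two:
  fixes p :: real
  assumes p: "0 < p"
    and sum_gt: "\<And>x. 0 < x \<Longrightarrow> x < pi/2 \<Longrightarrow> 2 < (x / sin x) powr (2 * p) + (x * cos x / sin x) powr p"
  shows "critical_exponent \<le> p"
proof -
  have near: "\<forall>\<^sub>F x in at_left (pi/2). 0 < x \<and> x < pi/2"
    using eventually_at_left_real[of 0 "pi/2"] by (simp add: greaterThanLessThan_iff)
  have "((\<lambda>x. x / sin x) \<longlongrightarrow> (pi/2) / sin (pi/2)) (at_left (pi/2))"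
    by (intro tendsto_intros) auto
  then have "((\<lambda>x. (x / sin x) powr (2 * p)) \<longlongrightarrow> (pi/2) powr (2 * p)) (at_left (pi/2))"
    using tendsto_powr[OF _ tendsto_const, of _ "pi/2" _ "2 * p"] by simp
  moreover have "((\<lambda>x. (x * cos x / sin x) powr p) \<longlongrightarrow> 0) (at_left (pi/2))"
  proof (rule tendsto_zero_powrI[OF _ tendsto_const _ p])
    have "((\<lambda>x. x * cos x / sin x) \<longlongrightarrow> pi/2 * cos (pi/2) / sin (pi/2)) (at_left (pi/2))"
      by (intro tendsto_intros) auto
    then show "((\<lambda>x. x * cos x / sin x) \<longlongrightarrow> 0) (at_left (pi/2))"
      by simp
    show "\<forall>\<^sub>F x in at_left (pi/2). 0 \<le> x * cos x / sin x"
      using near by eventually_elim (auto intro!: sin_ge_zero cos_ge_zero divide_nonneg_nonneg mult_nonneg_nonneg)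
  qed
  ultimately have "((\<lambda>x. (x / sin x) powr (2 * p) + (x * cos x / sin x) powr p)
      \<longlongrightarrow> (pi/2) powr (2 * p) + 0) (at_left (pi/2))"
    by (rule tendsto_add)
  moreover have "\<forall>\<^sub>F x in at_left (pi/2). 2 \<le> (x / sin x) powr (2 * p) + (x * cos x / sin x) powr p"
    using near by eventually_elim (use sum_gt in \<open>auto intro: less_imp_le\<close>)
  ultimately have "2 \<le> (pi/2) powr (2 * p)"
    using tendsto_lowerbound by fastforce
  then have "ln 2 \<le> 2 * p * ln (pi/2)"
    by (subst (asm) ln_le_cancel_iff[symmetric]) auto
  moreover have "ln pi - ln 2 = ln (pi/2)" "0 < ln (pi/2)"
    using pi_approx by (simp_all add: ln_div)
  ultimately show ?thesis
    unfolding critical_exponent_def by (simp add: divide_le_eq mult_ac)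
qed

theorem corollary4p10:
  fixes p :: real
  shows "(\<forall>x::real. 0 < x \<and> x < pi / 2 \<longrightarrow>
            (sin x / x) powr (2 * p) + (tan x / x) powr p
              > (x / sin x) powr (2 * p) + (x / tan x) powr p
          \<and> (x / sin x) powr (2 * p) + (x / tan x) powr p > 2)
         \<longleftrightarrow> p \<ge> ln 2 / (2 * (ln pi - ln 2))"
proof -
  have cot: "\<And>x::real. x / tan x = x * cos x / sin x"
    by (simp add: tan_def)
  have "1 < pi/2"
    using pi_gt3 by simp
  show ?thesis
    unfolding critical_exponent_def[symmetric]
  proof (intro iffI, goal_cases)
    case 1
    then have "0 < p"
      using spec[OF 1, of 1] reciprocal_sum_gt_iff_pos[of 1 p] \<open>1 < pi/2\<close> by auto
    then show ?case
      using 1 by (intro critical_exponent_le_of_sum_gt_two) (auto simp: cot)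
  next
    case 2
    moreover have "0 < p"
      using 2 critical_exponent_bounds by linarith
    ultimately show ?case
      using reciprocal_sum_gt_iff_pos sum_gt_two_of_critical_exponent_le by (auto simp: cot)
  qed
qed

end
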